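(* The Schubert cell $S_{w_0,w_0}$ is the disjoint union of the following $G$-orbits of points $(P,Pw_0,Pw_0n)$: (i) for each $u\in\mathbb{R}^\times$, the orbit with $n=n(1,1,u)$, of dimension $8$ (the maximal dimension), these orbits being distinct for distinct $u$; (ii) three orbits of dimension $8$ with $n=n(0,1,1)$, $n(1,0,1)$, $n(1,1,0)$, each with trivial stabilizer; (iii) three orbits of dimension $7$: $n=n(1,0,0)$ with stabilizer $\{d(a,a,1/a^2):a\in\mathbb{R}^\times\}$, $n=n(0,1,0)$ with stabilizer $\{d(a,1/a^2,a):a\in\mathbb{R}^\times\}$, and $n=n(0,0,1)$ with stabilizer $\{d(1/a^2,a,a):a\in\mathbb{R}^\times\}$; (iv) one orbit of dimension $6$ with $n=n(0,0,0)$ and stabilizer $D$.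
   Context: $G=\mathrm{SL}_3(\mathbb{R})$, $P$ the upper triangular matrices in $G$, $D$ the diagonal matrices in $G$; $G$ acts on $X=(P\backslash G)^3$ by right multiplication in each coordinate. $n(x,y,z)=\begin{pmatrix}1&x&y\\0&1&z\\0&0&1\end{pmatrix}$, $d(a,b,c)=\operatorname{diag}(a,b,c)$. $w_0=\begin{pmatrix}0&0&-1\\0&-1&0\\-1&0&0\end{pmatrix}$. $S_{w_0,w_0}=\big(\{P\}\times P\backslash Pw_0P\times P\backslash Pw_0P\big)\cdot G$. The stabilizer of $(P,Pv,Pwn)$ is $P\cap v^{-1}Pv\cap (wn)^{-1}P(wn)$. *)

theory Defs
  imports "HOL-Analysis.Analysis"
begin

type_synonym mat3 = "real^3^3"

definition SL3 :: "mat3 set" where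
  "SL3 = {A. det A = 1}"

definition Pgrp :: "mat3 set" where
  "Pgrp = {A \<in> SL3. A$2$1 = 0 \<and> A$3$1 = 0 \<and> A$3$2 = 0}"

definition Dgrp :: "mat3 set" where
  "Dgrp = {A \<in> SL3. A$1$2 = 0 \<and> A$1$3 = 0 \<and> A$2$1 = 0 \<and> A$2$3 = 0 \<and> A$3$1 = 0 \<and> A$3$2 = 0}"

definition nmat :: "real \<Rightarrow> real \<Rightarrow> real \<Rightarrow> mat3" where
  "nmat x y z = vector [vector [1, x, y], vector [0, 1, z], vector [0, 0, 1]]"

definition dmat :: "real \<Rightarrow> real \<Rightarrow> real \<Rightarrow> mat3" where
  "dmat a b c = vector [vector [a, 0, 0], vector [0, b, 0], vector [0, 0, c]]"

definition w0 :: mat3 where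
  "w0 = vector [vector [0, 0, -1], vector [0, -1, 0], vector [-1, 0, 0]]"

definition coset :: "mat3 \<Rightarrow> mat3 set" where
  "coset g = (\<lambda>p. p ** g) ` Pgrp"

type_synonym point = "mat3 set \<times> mat3 set \<times> mat3 set"

definition Xspace :: "point set" where
  "Xspace = {(coset a, coset b, coset c) | a b c. a \<in> SL3 \<and> b \<in> SL3 \<and> c \<in> SL3}"

definition coset_act :: "mat3 set \<Rightarrow> mat3 \<Rightarrow> mat3 set" where
  "coset_act C g = (\<lambda>h. h ** g) ` C"

definition act :: "point \<Rightarrow> mat3 \<Rightarrow> point" where
  "act x g = (case x of (A, B, C) \<Rightarrow> (coset_act A g, coset_act B g, coset_act C g))"

definition orbit :: "point \<Rightarrow> point set" where
  "orbit x = {act x g | g. g \<in> SL3}"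

definition stab :: "point \<Rightarrow> mat3 set" where
  "stab x = {g \<in> SL3. act x g = x}"

text \<open>The Schubert cell S_{w0,w0} = ({P} x P\<backslash>Pw0P x P\<backslash>Pw0P) . G.\<close>
definition S_w0w0 :: "point set" where
  "S_w0w0 = {act (coset (mat 1), coset (w0 ** p), coset (w0 ** q)) g | p q g.
               p \<in> Pgrp \<and> q \<in> Pgrp \<and> g \<in> SL3}"

definition pt :: "mat3 \<Rightarrow> point" where
  "pt n = (coset (mat 1), coset w0, coset (w0 ** n))"

fun mpow :: "mat3 \<Rightarrow> nat \<Rightarrow> mat3" where
  "mpow A 0 = mat 1"
| "mpow A (Suc k) = A ** mpow A k"

definition mexp :: "mat3 \<Rightarrow> mat3" where
  "mexp A = (\<Sum>k. (1 / fact k) *\<^sub>R mpow A k)"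

definition lie_alg :: "mat3 set \<Rightarrow> mat3 set" where
  "lie_alg H = {X. \<forall>t::real. mexp (t *\<^sub>R X) \<in> H}"

definition group_dim :: "mat3 set \<Rightarrow> nat" where
  "group_dim H = dim (lie_alg H)"

definition orbit_dim :: "point \<Rightarrow> nat" where
  "orbit_dim x = group_dim SL3 - group_dim (stab x)"

end

theory Submission
  imports Defs
begin

text \<open>
  The stabilizer of the pair \<open>(P, P w\<^sub>0)\<close> is \<open>P \<inter> w\<^sub>0\<^sup>-\<^sup>1 P w\<^sub>0 = D\<close>, and by the Bruhat
  decomposition \<open>P w\<^sub>0 P = P w\<^sub>0 N\<close> every point of \<open>S\<^bsub>w\<^sub>0,w\<^sub>0\<^esub>\<close> is in the orbit of some
  \<open>(P, P w\<^sub>0, P w\<^sub>0 n)\<close> with \<open>n = n(x,y,z)\<close> unipotent. Since \<open>P w\<^sub>0 n\<close> determines \<open>n\<close>, two such points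
  lie in one orbit iff \<open>n' = d\<^sup>-\<^sup>1 n d\<close> for some \<open>d \<in> D\<close>, i.e. iff
  \<open>(x', y', z') = (s x, s t y, t z)\<close> with \<open>s, t \<noteq> 0\<close>. The orbits of this action of \<open>(\<real>\<^sup>\<times>)\<^sup>2\<close> on \<open>\<real>\<^sup>3\<close>
  are represented by the listed normal forms, the generic ones being separated by the invariant
  \<open>x z / y\<close>. The stabilizers are the subgroups of \<open>D\<close> fixing \<open>n\<close>; their Lie algebras, and that of
  \<open>SL\<^sub>3\<close>, are computed from the derivative of \<open>t \<mapsto> exp (t X)\<close> at \<open>0\<close>.
\<close>

section \<open>The matrix exponential near the identity\<close>

lemma power2_norm_matrix: "(norm M)\<^sup>2 = (\<Sum>i\<in>UNIV. \<Sum>j\<in>UNIV. (M $ i $ j)\<^sup>2)"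
  for M :: "real^'n^'m"
  unfolding power2_norm_eq_inner by (simp add: inner_vec_def power2_eq_square)

lemma norm_matrix_mult_le:
  fixes A :: "real^'n^'m" and B :: "real^'p^'n"
  shows "norm (A ** B) \<le> norm A * norm B"
proof -
  have rows: "(\<Sum>i\<in>UNIV. (norm (A $ i))\<^sup>2) = (norm A)\<^sup>2"
    unfolding power2_norm_matrix power2_norm_eq_inner by (simp add: inner_vec_def power2_eq_square)
  have columns: "(\<Sum>j\<in>UNIV. (norm (column j B))\<^sup>2) = (norm B)\<^sup>2"
    unfolding power2_norm_matrix power2_norm_eq_inner
    by (simp add: inner_vec_def column_def power2_eq_square) (rule sum.swap)
  have "(norm (A ** B))\<^sup>2 = (\<Sum>i\<in>UNIV. \<Sum>j\<in>UNIV. (A $ i \<bullet> column j B)\<^sup>2)"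
    by (simp add: power2_norm_matrix matrix_matrix_mult_def inner_vec_def column_def)
  also have "\<dots> \<le> (\<Sum>i\<in>UNIV. \<Sum>j\<in>UNIV. (norm (A $ i))\<^sup>2 * (norm (column j B))\<^sup>2)"
    by (intro sum_mono) (simp add: power_mult_distrib[symmetric] abs_le_square_iff[symmetric] Cauchy_Schwarz_ineq2)
  also have "\<dots> = (norm A * norm B)\<^sup>2"
    by (simp add: sum_product[symmetric] rows columns power_mult_distrib)
  finally show ?thesis by (simp add: power2_le_iff_abs_le)
qed

lemma norm_mpow_le: "norm (mpow A k) \<le> norm (mat 1 :: mat3) * norm A ^ k"
proof (induction k)
  case (Suc k)
  have "norm (mpow A (Suc k)) \<le> norm A * norm (mpow A k)"
    by (simp add: norm_matrix_mult_le)
  also have "\<dots> \<le> norm A * (norm (mat 1 :: mat3) * norm A ^ k)"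
    by (intro mult_left_mono Suc.IH norm_ge_zero)
  finally show ?case by (simp add: mult_ac)
qed simp

lemma norm_mexp_term_le:
  "norm ((1 / fact k) *\<^sub>R mpow A k) \<le> norm (mat 1 :: mat3) * (norm A ^ k / fact k)"
  using norm_mpow_le[of A k] by (simp add: field_simps)

lemma sums_exp_real: "(\<lambda>n. r ^ n / fact n) sums exp (r :: real)"
  using exp_converges[of r] by (simp add: divide_inverse mult.commute)

lemma summable_mexp: "summable (\<lambda>k. (1 / fact k) *\<^sub>R mpow A k)"
  by (rule summable_comparison_test'[OF summable_mult[OF sums_summable[OF sums_exp_real]] norm_mexp_term_le])

lemma norm_mexp_remainder_le:
  "norm (mexp A - mat 1 - A) \<le> norm (mat 1 :: mat3) * (norm A)\<^sup>2 * exp (norm A)"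
proof -
  define f where "f k = (1 / fact k) *\<^sub>R mpow A k" for k
  define c where "c = norm (mat 1 :: mat3)"
  define r where "r = norm A"
  have "mexp A = (\<Sum>n. f (n + 2)) + (\<Sum>k<2. f k)"
    unfolding mexp_def f_def[symmetric]
    by (rule suminf_split_initial_segment) (simp add: f_def summable_mexp)
  then have remainder: "mexp A - mat 1 - A = (\<Sum>n. f (n + 2))"
    by (simp add: f_def numeral_2_eq_2)
  have "norm (f (n + 2)) \<le> c * r\<^sup>2 * (r ^ n / fact n)" for n
  proof -
    have "norm (f (n + 2)) \<le> c * (r ^ (n + 2) / fact (n + 2))"
      unfolding f_def c_def r_def by (rule norm_mexp_term_le)
    also have "\<dots> \<le> c * (r ^ (n + 2) / fact n)"
      by (intro mult_left_mono divide_left_mono fact_mono) (auto simp: c_def r_def)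
    finally show ?thesis by (simp add: power_add power2_eq_square mult_ac)
  qed
  then have "norm (\<Sum>n. f (n + 2)) \<le> (\<Sum>n. c * r\<^sup>2 * (r ^ n / fact n))"
    by (rule norm_suminf_le) (intro summable_mult sums_summable[OF sums_exp_real])
  also have "\<dots> = c * r\<^sup>2 * exp r"
    by (intro sums_unique[symmetric] sums_mult sums_exp_real)
  finally show ?thesis unfolding remainder c_def r_def .
qed

lemma mexp_difference_quotient_tendsto:
  "((\<lambda>t. (1 / t) *\<^sub>R (mexp (t *\<^sub>R X) - mat 1)) \<longlongrightarrow> X) (at 0)"
proof -
  define c where "c = norm (mat 1 :: mat3) * (norm X)\<^sup>2"
  have bound: "norm ((1 / t) *\<^sub>R (mexp (t *\<^sub>R X) - mat 1) - X) \<le> c * \<bar>t\<bar> * exp (\<bar>t\<bar> * norm X)"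
    if "t \<noteq> 0" for t
  proof -
    have "(1 / t) *\<^sub>R (mexp (t *\<^sub>R X) - mat 1) - X = (1 / t) *\<^sub>R (mexp (t *\<^sub>R X) - mat 1 - t *\<^sub>R X)"
      using that by (simp add: algebra_simps)
    then have "norm ((1 / t) *\<^sub>R (mexp (t *\<^sub>R X) - mat 1) - X)
        = norm (mexp (t *\<^sub>R X) - mat 1 - t *\<^sub>R X) / \<bar>t\<bar>"
      by simp
    also have "\<dots> \<le> norm (mat 1 :: mat3) * (\<bar>t\<bar> * norm X)\<^sup>2 * exp (\<bar>t\<bar> * norm X) / \<bar>t\<bar>"
      using norm_mexp_remainder_le[of "t *\<^sub>R X"] by (intro divide_right_mono) auto
    also have "\<dots> = c * \<bar>t\<bar> * exp (\<bar>t\<bar> * norm X)"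
      using that by (simp add: c_def power2_eq_square)
    finally show ?thesis .
  qed
  have "eventually (\<lambda>t. norm ((1 / t) *\<^sub>R (mexp (t *\<^sub>R X) - mat 1) - X)
      \<le> c * \<bar>t\<bar> * exp (\<bar>t\<bar> * norm X)) (at 0)"
    unfolding eventually_at_filter by (simp add: bound)
  moreover have "((\<lambda>t. c * \<bar>t\<bar> * exp (\<bar>t\<bar> * norm X)) \<longlongrightarrow> c * \<bar>0\<bar> * exp (\<bar>0\<bar> * norm X)) (at (0::real))"
    by (intro tendsto_intros)
  ultimately have "((\<lambda>t. (1 / t) *\<^sub>R (mexp (t *\<^sub>R X) - mat 1) - X) \<longlongrightarrow> 0) (at 0)"
    by (auto intro: Lim_null_comparison)
  then show ?thesis by (rule LIM_zero_cancel)
qed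

lemmas mat3_simps = vec_eq_iff forall_3 matrix_matrix_mult_def sum_3 dmat_def mat_def nmat_def w0_def

lemma dmat_mult: "dmat a b c ** dmat a' b' c' = dmat (a * a') (b * b') (c * c')"
  by (simp add: mat3_simps)

lemma mat1_eq_dmat: "(mat 1 :: mat3) = dmat 1 1 1"
  by (simp add: mat3_simps)

lemma scaleR_dmat: "t *\<^sub>R dmat a b c = dmat (t * a) (t * b) (t * c)"
  by (simp add: mat3_simps)

lemma dmat_eq_0_iff: "dmat a b c = 0 \<longleftrightarrow> a = 0 \<and> b = 0 \<and> c = 0"
  by (simp add: mat3_simps)

lemma det_dmat: "det (dmat a b c) = a * b * c"
  by (simp add: det_3 dmat_def)

lemma mpow_dmat: "mpow (dmat a b c) k = dmat (a ^ k) (b ^ k) (c ^ k)"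
  by (induction k) (simp_all add: mat1_eq_dmat dmat_mult)

lemma mexp_dmat: "mexp (dmat a b c) = dmat (exp a) (exp b) (exp c)"
proof -
  have "(1 / fact k) *\<^sub>R mpow (dmat a b c) k =
      (a ^ k / fact k) *\<^sub>R dmat 1 0 0 + (b ^ k / fact k) *\<^sub>R dmat 0 1 0 + (c ^ k / fact k) *\<^sub>R dmat 0 0 1" for k
    unfolding mpow_dmat by (simp add: mat3_simps)
  moreover have "(\<lambda>k. (a ^ k / fact k) *\<^sub>R dmat 1 0 0 + (b ^ k / fact k) *\<^sub>R dmat 0 1 0 + (c ^ k / fact k) *\<^sub>R dmat 0 0 1)
      sums (exp a *\<^sub>R dmat 1 0 0 + exp b *\<^sub>R dmat 0 1 0 + exp c *\<^sub>R dmat 0 0 1)"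
    by (intro sums_add sums_scaleR_left sums_exp_real)
  ultimately have "mexp (dmat a b c) = exp a *\<^sub>R dmat 1 0 0 + exp b *\<^sub>R dmat 0 1 0 + exp c *\<^sub>R dmat 0 0 1"
    unfolding mexp_def by (simp add: sums_iff)
  then show ?thesis by (simp add: mat3_simps)
qed

lemma mexp_square_zero:
  assumes "N ** N = 0"
  shows "mexp N = mat 1 + N"
proof -
  have "mpow N (Suc (Suc k)) = 0" for k
    using assms by (simp add: matrix_mul_assoc)
  then have "(1 / fact k) *\<^sub>R mpow N k = 0" if "k \<notin> {0, 1}" for k
    using that by (cases k; cases "k - 1") auto
  then have "(\<lambda>k. (1 / fact k) *\<^sub>R mpow N k) sums (\<Sum>k\<in>{0, 1}. (1 / fact k) *\<^sub>R mpow N k)"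
    by (intro sums_finite) auto
  then show ?thesis unfolding mexp_def by (simp add: sums_iff)
qed

section \<open>Lie algebras and their dimensions\<close>

lemma lie_alg_linear_constraint:
  assumes f: "bounded_linear f" and X: "X \<in> lie_alg H"
    and H: "\<And>A. A \<in> H \<Longrightarrow> f A = f (mat 1)"
  shows "f X = 0"
proof -
  have "f ((1 / t) *\<^sub>R (mexp (t *\<^sub>R X) - mat 1)) = 0" for t
    using X H[of "mexp (t *\<^sub>R X)"]
    by (simp add: lie_alg_def linear_scale[OF bounded_linear.linear[OF f]] linear_diff[OF bounded_linear.linear[OF f]])
  then have "((\<lambda>t. 0) \<longlongrightarrow> f X) (at (0::real))"
    using bounded_linear.tendsto[OF f mexp_difference_quotient_tendsto[of X]] by simp
  from LIM_const_eq[OF this] show ?thesis by simp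
qed

lemma bounded_linear_matrix_entry: "bounded_linear (\<lambda>A :: real^'n^'m. A $ i $ j)"
  by (rule bounded_linear_compose[OF bounded_linear_vec_nth bounded_linear_vec_nth])

lemma lie_alg_entry_eq_0:
  assumes "X \<in> lie_alg H" "\<And>A. A \<in> H \<Longrightarrow> A $ i $ j = mat 1 $ i $ j"
  shows "X $ i $ j = 0"
  using lie_alg_linear_constraint[OF bounded_linear_matrix_entry assms] .

lemma lie_alg_diag_entries_eq:
  assumes "X \<in> lie_alg H" "\<And>A. A \<in> H \<Longrightarrow> A $ i $ i = A $ j $ j"
  shows "X $ i $ i = X $ j $ j"
proof -
  have "(\<lambda>A :: mat3. A $ i $ i - A $ j $ j) X = 0"
    by (rule lie_alg_linear_constraint[OF bounded_linear_sub[OF bounded_linear_matrix_entry bounded_linear_matrix_entry] assms(1)])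
       (simp add: assms(2) mat_def)
  then show ?thesis by simp
qed

lemma lie_alg_mono: "H \<subseteq> K \<Longrightarrow> lie_alg H \<subseteq> lie_alg K"
  by (auto simp: lie_alg_def)

lemma det_mat1_plus_scaleR:
  fixes Y :: mat3
  shows "det (mat 1 + t *\<^sub>R Y) = 1 + t * (trace Y + t * (
      Y$1$1 * Y$2$2 - Y$1$2 * Y$2$1 + Y$1$1 * Y$3$3 - Y$1$3 * Y$3$1 + Y$2$2 * Y$3$3 - Y$2$3 * Y$3$2
      + t * det Y))"
  by (simp add: det_3 trace_def sum_3 mat_def algebra_simps)

lemma trace_lie_alg_SL3:
  assumes "X \<in> lie_alg SL3"
  shows "trace X = 0"
proof -
  \<comment> \<open>With \<open>Y t \<longlongrightarrow> X\<close>, \<open>1 = det (exp (t X)) = det (1 + t Y t) = 1 + t F t\<close> and \<open>F t \<longlongrightarrow> trace X\<close>.\<close>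
  define Y where "Y t = (1 / t) *\<^sub>R (mexp (t *\<^sub>R X) - mat 1)" for t
  define F where "F t = trace (Y t) + t * (
      Y t$1$1 * Y t$2$2 - Y t$1$2 * Y t$2$1 + Y t$1$1 * Y t$3$3 - Y t$1$3 * Y t$3$1
      + Y t$2$2 * Y t$3$3 - Y t$2$3 * Y t$3$2 + t * det (Y t))" for t
  have Y: "(Y \<longlongrightarrow> X) (at 0)"
    unfolding Y_def by (rule mexp_difference_quotient_tendsto)
  have "(F \<longlongrightarrow> trace X + 0 * (
      X$1$1 * X$2$2 - X$1$2 * X$2$1 + X$1$1 * X$3$3 - X$1$3 * X$3$1
      + X$2$2 * X$3$3 - X$2$3 * X$3$2 + 0 * det X)) (at 0)"
    unfolding F_def trace_def det_3 sum_3 by (intro tendsto_intros Y)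
  moreover have "F t = 0" if "t \<noteq> 0" for t
  proof -
    have "mexp (t *\<^sub>R X) = mat 1 + t *\<^sub>R Y t"
      using that by (simp add: Y_def)
    moreover have "det (mexp (t *\<^sub>R X)) = 1"
      using assms by (simp add: lie_alg_def SL3_def)
    ultimately have "det (mat 1 + t *\<^sub>R Y t) = 1"
      by simp
    then show "F t = 0"
      using that unfolding det_mat1_plus_scaleR F_def by simp
  qed
  then have "(F \<longlongrightarrow> 0) (at 0)"
    by (intro tendsto_eventually) (auto simp: eventually_at_filter)
  ultimately show ?thesis
    using tendsto_unique[OF at_neq_bot] by fastforce
qed

lemma dim_eq_dim_spanning_subset: "B \<subseteq> S \<Longrightarrow> S \<subseteq> span B \<Longrightarrow> dim S = dim B"
  for S :: "'a::euclidean_space set"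
  by (metis antisym dim_span dim_subset)

definition matrix_unit :: "3 \<Rightarrow> 3 \<Rightarrow> mat3" where
  "matrix_unit i j = (\<chi> k l. if k = i \<and> l = j then 1 else 0)"

lemma matrix_unit_in_lie_alg_SL3:
  assumes "i \<noteq> j"
  shows "matrix_unit i j \<in> lie_alg SL3"
proof -
  have "(t *\<^sub>R matrix_unit i j) ** (t *\<^sub>R matrix_unit i j) = 0" for t
    using assms by (auto simp: vec_eq_iff matrix_matrix_mult_def matrix_unit_def intro!: sum.neutral)
  then have "mexp (t *\<^sub>R matrix_unit i j) = mat 1 + t *\<^sub>R matrix_unit i j" for t
    by (rule mexp_square_zero)
  moreover have "det (mat 1 + t *\<^sub>R matrix_unit i j) = 1" for t
    using assms exhaust_3[of i] exhaust_3[of j] by (auto simp: det_3 mat_def matrix_unit_def)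
  ultimately show ?thesis
    by (simp add: lie_alg_def SL3_def)
qed

lemma traceless_matrix_decomposition:
  fixes X :: mat3
  assumes "X$3$3 = - X$1$1 - X$2$2"
  shows "X = X$1$2 *\<^sub>R matrix_unit 1 2 + X$1$3 *\<^sub>R matrix_unit 1 3 + X$2$1 *\<^sub>R matrix_unit 2 1
    + X$2$3 *\<^sub>R matrix_unit 2 3 + X$3$1 *\<^sub>R matrix_unit 3 1 + X$3$2 *\<^sub>R matrix_unit 3 2
    + X$1$1 *\<^sub>R dmat 1 (-1) 0 + (X$1$1 + X$2$2) *\<^sub>R dmat 0 1 (-1)"
  using assms by (simp add: vec_eq_iff forall_3 matrix_unit_def dmat_def)

lemma Dgrp_subset_SL3: "Dgrp \<subseteq> SL3"
  by (auto simp: Dgrp_def)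

lemma dmat_in_Dgrp_iff: "dmat a b c \<in> Dgrp \<longleftrightarrow> a * b * c = 1"
  by (simp add: Dgrp_def SL3_def det_dmat) (simp add: dmat_def)

lemma Dgrp_eq: "Dgrp = {dmat a b c | a b c. a * b * c = 1}"
proof (intro set_eqI iffI)
  fix A assume A: "A \<in> Dgrp"
  then have "A = dmat (A$1$1) (A$2$2) (A$3$3)"
    by (simp add: Dgrp_def mat3_simps)
  with A show "A \<in> {dmat a b c | a b c. a * b * c = 1}"
    by (metis (mono_tags, lifting) dmat_in_Dgrp_iff mem_Collect_eq)
qed (auto simp: dmat_in_Dgrp_iff)

lemma lie_alg_Dgrp: "lie_alg Dgrp = {dmat a b c | a b c. a + b + c = 0}"
proof (intro set_eqI iffI)
  fix X assume X: "X \<in> lie_alg Dgrp"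
  have "X $ i $ j = 0" if "i \<noteq> j" for i j
    by (rule lie_alg_entry_eq_0[OF X]) (use that exhaust_3[of i] exhaust_3[of j] in \<open>auto simp: Dgrp_def mat_def\<close>)
  moreover have "trace X = 0"
    using X lie_alg_mono[OF Dgrp_subset_SL3] trace_lie_alg_SL3 by blast
  ultimately have "X = dmat (X$1$1) (X$2$2) (X$3$3)" "X$1$1 + X$2$2 + X$3$3 = 0"
    by (simp_all add: trace_def mat3_simps)
  then show "X \<in> {dmat a b c | a b c. a + b + c = 0}"
    by blast
next
  fix X assume "X \<in> {dmat a b c | a b c. a + b + c = 0}"
  then obtain a b c where "X = dmat a b c" "a + b + c = 0"
    by blast
  moreover have "exp (t * a) * exp (t * b) * exp (t * c) = 1" for t
    using \<open>a + b + c = 0\<close> by (simp add: exp_add[symmetric] distrib_left[symmetric])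
  ultimately show "X \<in> lie_alg Dgrp"
    by (simp add: lie_alg_def scaleR_dmat mexp_dmat dmat_in_Dgrp_iff)
qed

lemma group_dim_SL3: "group_dim SL3 = 8"
proof -
  let ?H = "{X :: mat3. mat 1 \<bullet> X = 0}"
  have trace_eq_inner: "trace X = mat 1 \<bullet> X" for X :: mat3
    by (simp add: inner_vec_def trace_def sum_3 mat_def)
  have dmat: "dmat a b c \<in> lie_alg SL3" if "a + b + c = 0" for a b c
    using that lie_alg_mono[OF Dgrp_subset_SL3] by (auto simp: lie_alg_Dgrp)
  have "?H \<subseteq> span (lie_alg SL3)"
  proof
    fix X :: mat3 assume "X \<in> ?H"
    then have "X$3$3 = - X$1$1 - X$2$2"
      by (simp add: trace_eq_inner[symmetric] trace_def sum_3)
    note X = traceless_matrix_decomposition[OF this]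
    show "X \<in> span (lie_alg SL3)"
      by (subst X) (intro span_add span_scale span_base matrix_unit_in_lie_alg_SL3 dmat; simp)
  qed
  moreover have "lie_alg SL3 \<subseteq> ?H"
    using trace_lie_alg_SL3 by (simp add: subset_eq trace_eq_inner)
  ultimately have "dim ?H = dim (lie_alg SL3)"
    by (rule dim_eq_dim_spanning_subset[rotated])
  moreover have "dim ?H = 8"
  proof -
    have "(mat 1 :: mat3) $ 1 $ 1 \<noteq> 0 $ 1 $ 1"
      by (simp add: mat_def)
    then have "(mat 1 :: mat3) \<noteq> 0"
      by metis
    then show ?thesis
      by (simp add: dim_hyperplane)
  qed
  ultimately show ?thesis
    unfolding group_dim_def by simp
qed

lemma dmat_in_lie_alg_Dgrp: "a + b + c = 0 \<Longrightarrow> dmat a b c \<in> lie_alg Dgrp"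
  by (auto simp: lie_alg_Dgrp)

lemma group_dim_Dgrp: "group_dim Dgrp = 2"
proof -
  let ?A = "dmat 1 (-1) 0" and ?B = "dmat 0 1 (-1)"
  have "lie_alg Dgrp \<subseteq> span {?A, ?B}"
  proof
    fix X assume "X \<in> lie_alg Dgrp"
    then obtain a b c where "X = dmat a b c" "a + b + c = 0"
      by (auto simp: lie_alg_Dgrp)
    then have "X = a *\<^sub>R ?A + (a + b) *\<^sub>R ?B"
      by (simp add: mat3_simps)
    then show "X \<in> span {?A, ?B}"
      by (simp add: span_add span_base span_scale)
  qed
  moreover have "{?A, ?B} \<subseteq> lie_alg Dgrp"
    by (simp add: dmat_in_lie_alg_Dgrp)
  ultimately have "dim (lie_alg Dgrp) = dim (insert ?A {?B})"
    by (rule dim_eq_dim_spanning_subset[rotated])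
  also have "\<dots> = 2"
  proof -
    have "?A \<notin> span {?B}" "?B \<noteq> 0"
      by (auto simp: span_singleton mat3_simps)
    then show ?thesis
      by (simp add: dim_insert)
  qed
  finally show ?thesis unfolding group_dim_def .
qed

lemma group_dim_trivial: "group_dim {mat 1} = 0"
proof -
  have "X $ i $ j = 0" if "X \<in> lie_alg {mat 1}" for X i j
    using that by (rule lie_alg_entry_eq_0) simp
  then have "lie_alg {mat 1} \<subseteq> {0}"
    by (auto simp: vec_eq_iff)
  then show ?thesis
    by (simp add: group_dim_def)
qed

lemma group_dim_torus:
  assumes "H \<subseteq> Dgrp" and E: "E \<in> lie_alg H" "E \<noteq> 0"
    and "i \<noteq> j" and H: "\<And>A. A \<in> H \<Longrightarrow> A $ i $ i = A $ j $ j"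
  shows "group_dim H = 1"
proof -
  have "lie_alg H \<subseteq> span {E}"
  proof
    fix X assume X: "X \<in> lie_alg H"
    have "X \<in> lie_alg Dgrp" "E \<in> lie_alg Dgrp"
      using X E(1) lie_alg_mono[OF assms(1)] by blast+
    then obtain x1 x2 x3 e1 e2 e3 where X_dmat: "X = dmat x1 x2 x3" "x1 + x2 + x3 = 0"
      and E_dmat: "E = dmat e1 e2 e3" "e1 + e2 + e3 = 0"
      unfolding lie_alg_Dgrp by blast
    then have "x3 = - x1 - x2" "e3 = - e1 - e2"
      by linarith+
    with X_dmat E_dmat have x: "X = dmat x1 x2 (- x1 - x2)" and e: "E = dmat e1 e2 (- e1 - e2)"
      by simp_all
    have "X $ i $ i = X $ j $ j" "E $ i $ i = E $ j $ j"
      using X E(1) by (auto intro: lie_alg_diag_entries_eq H)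
    then have "x1 * e2 = x2 * e1"
      using \<open>i \<noteq> j\<close> exhaust_3[of i] exhaust_3[of j] unfolding x e
      by (auto simp: dmat_def) (metis minus_equation_iff mult.left_commute mult_minus_left mult.commute)+
    moreover have "e1 \<noteq> 0 \<or> e2 \<noteq> 0"
      using E(2) e by (auto simp: dmat_eq_0_iff)
    ultimately have "X = (if e1 \<noteq> 0 then x1 / e1 else x2 / e2) *\<^sub>R E"
      unfolding x e by (auto simp: scaleR_dmat field_simps)
    then show "X \<in> span {E}"
      by (metis span_base span_scale singletonI)
  qed
  then have "dim (lie_alg H) = dim {E}"
    using E(1) by (intro dim_eq_dim_spanning_subset) auto
  then show ?thesis
    using E(2) by (simp add: group_dim_def)
qed

lemma exp_minus_double: "exp (- (t * 2)) = 1 / (exp t)\<^sup>2" for t :: real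
  by (simp add: exp_minus inverse_eq_divide exp_double mult.commute[of t 2])

lemma group_dim_torus_12: "group_dim {dmat a a (1 / a\<^sup>2) | a. a \<noteq> 0} = 1"
proof (rule group_dim_torus[of _ "dmat 1 1 (-2)" 1 2])
  show "{dmat a a (1 / a\<^sup>2) | a. a \<noteq> 0} \<subseteq> Dgrp"
    by (auto simp: dmat_in_Dgrp_iff power2_eq_square)
  show "dmat 1 1 (-2) \<in> lie_alg {dmat a a (1 / a\<^sup>2) | a. a \<noteq> 0}"
  proof -
    have "mexp (t *\<^sub>R dmat 1 1 (-2)) = dmat (exp t) (exp t) (1 / (exp t)\<^sup>2)" for t
      by (simp add: scaleR_dmat mexp_dmat exp_minus_double)
    then show ?thesis
      unfolding lie_alg_def by auto
  qed
  show "dmat 1 1 (-2) \<noteq> 0"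
    by (simp add: dmat_eq_0_iff)
qed (auto simp: dmat_def)

lemma group_dim_torus_13: "group_dim {dmat a (1 / a\<^sup>2) a | a. a \<noteq> 0} = 1"
proof (rule group_dim_torus[of _ "dmat 1 (-2) 1" 1 3])
  show "{dmat a (1 / a\<^sup>2) a | a. a \<noteq> 0} \<subseteq> Dgrp"
    by (auto simp: dmat_in_Dgrp_iff power2_eq_square)
  show "dmat 1 (-2) 1 \<in> lie_alg {dmat a (1 / a\<^sup>2) a | a. a \<noteq> 0}"
  proof -
    have "mexp (t *\<^sub>R dmat 1 (-2) 1) = dmat (exp t) (1 / (exp t)\<^sup>2) (exp t)" for t
      by (simp add: scaleR_dmat mexp_dmat exp_minus_double)
    then show ?thesis
      unfolding lie_alg_def by auto
  qed
  show "dmat 1 (-2) 1 \<noteq> 0"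
    by (simp add: dmat_eq_0_iff)
qed (auto simp: dmat_def)

lemma group_dim_torus_23: "group_dim {dmat (1 / a\<^sup>2) a a | a. a \<noteq> 0} = 1"
proof (rule group_dim_torus[of _ "dmat (-2) 1 1" 2 3])
  show "{dmat (1 / a\<^sup>2) a a | a. a \<noteq> 0} \<subseteq> Dgrp"
    by (auto simp: dmat_in_Dgrp_iff power2_eq_square)
  show "dmat (-2) 1 1 \<in> lie_alg {dmat (1 / a\<^sup>2) a a | a. a \<noteq> 0}"
  proof -
    have "mexp (t *\<^sub>R dmat (-2) 1 1) = dmat (1 / (exp t)\<^sup>2) (exp t) (exp t)" for t
      by (simp add: scaleR_dmat mexp_dmat exp_minus_double)
    then show ?thesis
      unfolding lie_alg_def by auto
  qed
  show "dmat (-2) 1 1 \<noteq> 0"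
    by (simp add: dmat_eq_0_iff)
qed (auto simp: dmat_def)

section \<open>Cosets and orbits\<close>

lemma Pgrp_iff:
  "A \<in> Pgrp \<longleftrightarrow> A$2$1 = 0 \<and> A$3$1 = 0 \<and> A$3$2 = 0 \<and> A$1$1 * A$2$2 * A$3$3 = 1"
  by (auto simp: Pgrp_def SL3_def det_3)

lemma Pgrp_mult: "p \<in> Pgrp \<Longrightarrow> q \<in> Pgrp \<Longrightarrow> p ** q \<in> Pgrp"
  by (auto simp: Pgrp_def SL3_def det_mul) (auto simp: matrix_matrix_mult_def sum_3)

lemma Pgrp_left_inverse:
  assumes "p \<in> Pgrp"
  shows "\<exists>q\<in>Pgrp. q ** p = mat 1"
proof -
  have p: "p$2$1 = 0" "p$3$1 = 0" "p$3$2 = 0" "p$1$1 * p$2$2 * p$3$3 = 1"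
    using assms by (auto simp: Pgrp_iff)
  then have "p$1$1 \<noteq> 0" "p$2$2 \<noteq> 0" "p$3$3 \<noteq> 0"
    by auto
  define q :: mat3 where "q = vector [
      vector [1 / p$1$1, - p$1$2 / (p$1$1 * p$2$2), (p$1$2 * p$2$3 - p$1$3 * p$2$2) / (p$1$1 * p$2$2 * p$3$3)],
      vector [0, 1 / p$2$2, - p$2$3 / (p$2$2 * p$3$3)],
      vector [0, 0, 1 / p$3$3]]"
  have "q \<in> Pgrp"
    using p by (simp add: Pgrp_iff q_def field_simps)
  moreover have "q ** p = mat 1"
    using p \<open>p$1$1 \<noteq> 0\<close> \<open>p$2$2 \<noteq> 0\<close> \<open>p$3$3 \<noteq> 0\<close> by (simp add: q_def mat3_simps field_simps)
  ultimately show ?thesis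
    by blast
qed

lemma SL3_mult: "g \<in> SL3 \<Longrightarrow> h \<in> SL3 \<Longrightarrow> g ** h \<in> SL3"
  by (simp add: SL3_def det_mul)

lemma SL3_right_inverse:
  assumes "g \<in> SL3"
  shows "\<exists>h\<in>SL3. g ** h = mat 1"
proof -
  have "invertible g"
    using assms by (simp add: invertible_det_nz SL3_def)
  then obtain h where h: "g ** h = mat 1"
    unfolding invertible_def by blast
  then have "det g * det h = 1"
    by (simp flip: det_mul)
  then have "det h = 1"
    using assms by (simp add: SL3_def)
  with h show ?thesis
    by (auto simp: SL3_def)
qed

lemma mat1_in_Pgrp: "mat 1 \<in> Pgrp"
  by (simp add: Pgrp_iff mat_def)

lemma coset_mult_Pgrp: "p \<in> Pgrp \<Longrightarrow> coset (p ** b) = coset b"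
proof -
  assume p: "p \<in> Pgrp"
  have "(\<lambda>q. q ** p) ` Pgrp = Pgrp"
  proof
    show "(\<lambda>q. q ** p) ` Pgrp \<subseteq> Pgrp"
      using Pgrp_mult p by auto
    show "Pgrp \<subseteq> (\<lambda>q. q ** p) ` Pgrp"
    proof
      fix q assume q: "q \<in> Pgrp"
      obtain p' where "p' \<in> Pgrp" "p' ** p = mat 1"
        using Pgrp_left_inverse[OF p] by blast
      then have "q = (q ** p') ** p" "q ** p' \<in> Pgrp"
        using Pgrp_mult[OF q] by (simp_all add: matrix_mul_assoc[symmetric])
      then show "q \<in> (\<lambda>q. q ** p) ` Pgrp"
        by blast
    qed
  qed
  then have "coset (p ** b) = (\<lambda>q. q ** b) ` ((\<lambda>q. q ** p) ` Pgrp)"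
    unfolding coset_def image_image by (simp add: matrix_mul_assoc)
  with \<open>(\<lambda>q. q ** p) ` Pgrp = Pgrp\<close> show ?thesis
    by (simp add: coset_def)
qed

lemma coset_eq_iff: "coset a = coset b \<longleftrightarrow> (\<exists>p\<in>Pgrp. a = p ** b)"
proof
  assume "coset a = coset b"
  moreover have "a \<in> coset a"
    unfolding coset_def using mat1_in_Pgrp by force
  ultimately show "\<exists>p\<in>Pgrp. a = p ** b"
    by (auto simp: coset_def)
qed (auto simp: coset_mult_Pgrp)

lemma act_act: "act (act x g) h = act x (g ** h)"
  by (auto simp: act_def coset_act_def image_image matrix_mul_assoc split: prod.splits)

lemma act_mat1: "act x (mat 1) = x"
  by (auto simp: act_def coset_act_def split: prod.splits)

lemma act_coset: "act (coset a, coset b, coset c) g = (coset (a ** g), coset (b ** g), coset (c ** g))"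
  by (simp add: act_def coset_act_def coset_def image_image matrix_mul_assoc)

lemma orbit_act: "g \<in> SL3 \<Longrightarrow> y \<in> orbit x \<Longrightarrow> act y g \<in> orbit x"
  by (auto simp: orbit_def act_act intro: SL3_mult)

lemma orbit_sym: "y \<in> orbit x \<Longrightarrow> x \<in> orbit y"
proof -
  assume "y \<in> orbit x"
  then obtain g where "g \<in> SL3" "y = act x g"
    by (auto simp: orbit_def)
  moreover obtain h where "h \<in> SL3" "g ** h = mat 1"
    using SL3_right_inverse[OF \<open>g \<in> SL3\<close>] by blast
  ultimately have "x = act y h" "h \<in> SL3"
    by (simp_all add: act_act act_mat1)
  then show "x \<in> orbit y"
    by (auto simp: orbit_def)
qed

lemma mem_orbit_self: "x \<in> orbit x"
  unfolding orbit_def SL3_def using act_mat1[of x] det_I by (metis (mono_tags) mem_Collect_eq)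

lemma orbit_subset: "y \<in> orbit x \<Longrightarrow> orbit y \<subseteq> orbit x"
  by (auto simp: orbit_def[of y] intro: orbit_act)

lemma orbit_eq: "y \<in> orbit x \<Longrightarrow> orbit y = orbit x"
  by (rule antisym[OF orbit_subset orbit_subset[OF orbit_sym]])

lemma orbits_meet_imp_eq: "orbit x \<inter> orbit y \<noteq> {} \<Longrightarrow> orbit x = orbit y"
proof -
  assume "orbit x \<inter> orbit y \<noteq> {}"
  then obtain z where "z \<in> orbit x" "z \<in> orbit y"
    by blast
  then show ?thesis
    using orbit_eq by metis
qed

section \<open>The orbits in the Schubert cell\<close>

lemma act_pt: "act (pt n) g = (coset g, coset (w0 ** g), coset (w0 ** n ** g))"
  by (simp add: pt_def act_coset)

lemma w0_dmat: "w0 ** dmat a b c = dmat c b a ** w0"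
  by (simp add: mat3_simps)

lemma dmat_in_Pgrp: "a * b * c = 1 \<Longrightarrow> dmat a b c \<in> Pgrp"
  by (simp add: Pgrp_iff dmat_def)

lemma coset_w0_dmat_mult: "a * b * c = 1 \<Longrightarrow> coset (w0 ** (dmat a b c ** M)) = coset (w0 ** M)"
  using coset_mult_Pgrp[of "dmat c b a" "w0 ** M"]
  by (simp add: matrix_mul_assoc w0_dmat dmat_in_Pgrp mult_ac)

lemma coset_pair_fixed_iff_Dgrp: "coset g = coset (mat 1) \<and> coset (w0 ** g) = coset w0 \<longleftrightarrow> g \<in> Dgrp"
proof
  assume "coset g = coset (mat 1) \<and> coset (w0 ** g) = coset w0"
  then obtain p where g: "g \<in> Pgrp" and p: "p \<in> Pgrp" "w0 ** g = p ** w0"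
    by (auto simp: coset_eq_iff)
  have "(w0 ** g) $ i $ j = (p ** w0) $ i $ j" for i j
    using p(2) by simp
  from this[of 3 2] this[of 3 3] this[of 2 3] g p(1) have "g$1$2 = 0" "g$1$3 = 0" "g$2$3 = 0"
    by (simp_all add: Pgrp_iff matrix_matrix_mult_def sum_3 w0_def)
  with g show "g \<in> Dgrp"
    by (simp add: Dgrp_def Pgrp_def)
next
  assume "g \<in> Dgrp"
  then obtain a b c where "g = dmat a b c" "a * b * c = 1"
    by (auto simp: Dgrp_eq)
  then show "coset g = coset (mat 1) \<and> coset (w0 ** g) = coset w0"
    using coset_mult_Pgrp[of g "mat 1"] coset_w0_dmat_mult[of a b c "mat 1"]
    by (simp add: dmat_in_Pgrp)
qed

lemma coset_w0_nmat_eq_iff: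
  "coset (w0 ** nmat x y z) = coset (w0 ** nmat x' y' z') \<longleftrightarrow> x = x' \<and> y = y' \<and> z = z'"
proof
  \<comment> \<open>\<open>w\<^sub>0 N w\<^sub>0\<^sup>-\<^sup>1\<close> is lower unitriangular, so it meets \<open>P\<close> only in the identity.\<close>
  assume "coset (w0 ** nmat x y z) = coset (w0 ** nmat x' y' z')"
  then obtain p where p: "p \<in> Pgrp" "w0 ** nmat x y z = p ** (w0 ** nmat x' y' z')"
    by (auto simp: coset_eq_iff)
  have "(w0 ** nmat x y z) $ i $ j = (p ** (w0 ** nmat x' y' z')) $ i $ j" for i j
    using p(2) by simp
  from this[of 3 1] this[of 3 2] this[of 3 3] this[of 2 1] this[of 2 2] this[of 2 3] p(1)
  show "x = x' \<and> y = y' \<and> z = z'"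
    by (simp_all add: Pgrp_iff mat3_simps)
qed simp

lemma nmat_dmat:
  "a \<noteq> 0 \<Longrightarrow> b \<noteq> 0 \<Longrightarrow> nmat x y z ** dmat a b c = dmat a b c ** nmat (x * b / a) (y * c / a) (z * c / b)"
  by (simp add: mat3_simps)

lemma pt_act_eq_iff:
  "act (pt (nmat x y z)) g = pt (nmat x' y' z') \<longleftrightarrow>
    (\<exists>a b c. g = dmat a b c \<and> a * b * c = 1 \<and> x' = x * b / a \<and> y' = y * c / a \<and> z' = z * c / b)"
proof -
  have conjugate: "coset (w0 ** nmat x y z ** dmat a b c) = coset (w0 ** nmat (x * b / a) (y * c / a) (z * c / b))"
    if "a * b * c = 1" for a b c
  proof -
    have "a \<noteq> 0" "b \<noteq> 0"
      using that by auto
    then have "w0 ** nmat x y z ** dmat a b c = w0 ** (dmat a b c ** nmat (x * b / a) (y * c / a) (z * c / b))"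
      by (simp add: nmat_dmat flip: matrix_mul_assoc)
    then show ?thesis
      by (simp add: coset_w0_dmat_mult[OF that])
  qed
  have "act (pt (nmat x y z)) g = pt (nmat x' y' z') \<longleftrightarrow>
      g \<in> Dgrp \<and> coset (w0 ** nmat x y z ** g) = coset (w0 ** nmat x' y' z')"
    unfolding act_pt by (simp add: pt_def flip: coset_pair_fixed_iff_Dgrp)
  also have "\<dots> \<longleftrightarrow> (\<exists>a b c. g = dmat a b c \<and> a * b * c = 1 \<and> x' = x * b / a \<and> y' = y * c / a \<and> z' = z * c / b)"
    by (force simp: Dgrp_eq conjugate coset_w0_nmat_eq_iff)
  finally show ?thesis .
qed

lemma dmat_in_SL3: "a * b * c = 1 \<Longrightarrow> dmat a b c \<in> SL3"
  by (simp add: SL3_def det_dmat)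

lemma exists_dmat_with_ratios:
  fixes s t :: real
  assumes "s \<noteq> 0" "t \<noteq> 0"
  shows "\<exists>a b c. a * b * c = 1 \<and> b = s * a \<and> c = t * b"
proof -
  define a where "a = root 3 (1 / (s\<^sup>2 * t))"
  have "a ^ 3 = 1 / (s\<^sup>2 * t)"
    unfolding a_def by (simp add: odd_real_root_pow)
  then have "a * (s * a) * (t * (s * a)) = 1"
    using assms by (simp add: power3_eq_cube power2_eq_square field_simps)
  then show ?thesis
    by blast
qed

lemma pt_nmat_in_orbit_iff:
  "pt (nmat x' y' z') \<in> orbit (pt (nmat x y z)) \<longleftrightarrow>
    (\<exists>s t. s \<noteq> 0 \<and> t \<noteq> 0 \<and> x' = x * s \<and> y' = y * s * t \<and> z' = z * t)"
proof
  assume "pt (nmat x' y' z') \<in> orbit (pt (nmat x y z))"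
  then obtain g where "act (pt (nmat x y z)) g = pt (nmat x' y' z')"
    unfolding orbit_def by auto
  then obtain a b c where "a * b * c = 1" "x' = x * b / a" "y' = y * c / a" "z' = z * c / b"
    by (auto simp: pt_act_eq_iff)
  then show "\<exists>s t. s \<noteq> 0 \<and> t \<noteq> 0 \<and> x' = x * s \<and> y' = y * s * t \<and> z' = z * t"
    by (intro exI[of _ "b / a"] exI[of _ "c / b"]) auto
next
  assume "\<exists>s t. s \<noteq> 0 \<and> t \<noteq> 0 \<and> x' = x * s \<and> y' = y * s * t \<and> z' = z * t"
  then obtain s t where st: "s \<noteq> 0" "t \<noteq> 0" "x' = x * s" "y' = y * s * t" "z' = z * t"
    by blast
  then obtain a b c where abc: "a * b * c = 1" "b = s * a" "c = t * b"
    using exists_dmat_with_ratios by blast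
  then have "a \<noteq> 0"
    by auto
  with st abc have "act (pt (nmat x y z)) (dmat a b c) = pt (nmat x' y' z')"
    unfolding pt_act_eq_iff by (intro exI[of _ a] exI[of _ b] exI[of _ c]) auto
  then show "pt (nmat x' y' z') \<in> orbit (pt (nmat x y z))"
    unfolding orbit_def using dmat_in_SL3[OF abc(1)] by (metis (mono_tags, lifting) mem_Collect_eq)
qed

lemma stab_pt_nmat:
  "stab (pt (nmat x y z)) =
    {dmat a b c | a b c. a * b * c = 1 \<and> x = x * b / a \<and> y = y * c / a \<and> z = z * c / b}"
proof (intro set_eqI iffI)
  fix g assume "g \<in> stab (pt (nmat x y z))"
  then show "g \<in> {dmat a b c | a b c. a * b * c = 1 \<and> x = x * b / a \<and> y = y * c / a \<and> z = z * c / b}"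
    unfolding stab_def pt_act_eq_iff by blast
next
  fix g assume "g \<in> {dmat a b c | a b c. a * b * c = 1 \<and> x = x * b / a \<and> y = y * c / a \<and> z = z * c / b}"
  then show "g \<in> stab (pt (nmat x y z))"
    unfolding stab_def pt_act_eq_iff using dmat_in_SL3 by blast
qed

lemma real_cube_eq_1:
  fixes a :: real
  assumes "a * a * a = 1"
  shows "a = 1"
proof -
  have "a = root 3 (a ^ 3)"
    by (simp add: odd_real_root_power_cancel)
  also have "\<dots> = 1"
    using assms by (simp add: power3_eq_cube)
  finally show ?thesis .
qed

lemma stab_pt_nmat_trivial:
  assumes "\<And>a b c. a * b * c = 1 \<Longrightarrow> x = x * b / a \<Longrightarrow> y = y * c / a \<Longrightarrow> z = z * c / b \<Longrightarrow> a = b \<and> b = c"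
  shows "stab (pt (nmat x y z)) = {mat 1}"
proof (intro set_eqI iffI)
  fix g :: mat3 assume "g \<in> stab (pt (nmat x y z))"
  then obtain a b c where g: "g = dmat a b c" "a * b * c = 1" "x = x * b / a" "y = y * c / a" "z = z * c / b"
    unfolding stab_pt_nmat by blast
  with assms have "a = 1" "b = 1" "c = 1"
    using real_cube_eq_1 by metis+
  with g show "g \<in> {mat 1}"
    by (simp add: mat1_eq_dmat)
next
  fix g :: mat3 assume "g \<in> {mat 1}"
  then show "g \<in> stab (pt (nmat x y z))"
    unfolding stab_pt_nmat mat1_eq_dmat by force
qed

lemma stab_pt_nmat_11u: "stab (pt (nmat 1 1 u)) = {mat 1}"
  by (rule stab_pt_nmat_trivial) (auto simp: field_simps)

lemma stab_pt_nmat_011: "stab (pt (nmat 0 1 1)) = {mat 1}"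
  by (rule stab_pt_nmat_trivial) (auto simp: field_simps)

lemma stab_pt_nmat_101: "stab (pt (nmat 1 0 1)) = {mat 1}"
  by (rule stab_pt_nmat_trivial) (auto simp: field_simps)

lemma stab_pt_nmat_110: "stab (pt (nmat 1 1 0)) = {mat 1}"
  by (rule stab_pt_nmat_trivial) (auto simp: field_simps)

lemma stab_pt_nmat_100: "stab (pt (nmat 1 0 0)) = {dmat a a (1 / a\<^sup>2) | a. a \<noteq> 0}"
proof -
  have "a * b * c = 1 \<and> 1 = 1 * b / a \<longleftrightarrow> a \<noteq> 0 \<and> b = a \<and> c = 1 / a\<^sup>2" for a b c :: real
    by (auto simp: field_simps power2_eq_square)
  then show ?thesis
    unfolding stab_pt_nmat by auto
qed

lemma stab_pt_nmat_010: "stab (pt (nmat 0 1 0)) = {dmat a (1 / a\<^sup>2) a | a. a \<noteq> 0}"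
proof -
  have "a * b * c = 1 \<and> 1 = 1 * c / a \<longleftrightarrow> a \<noteq> 0 \<and> c = a \<and> b = 1 / a\<^sup>2" for a b c :: real
    by (auto simp: field_simps power2_eq_square)
  then show ?thesis
    unfolding stab_pt_nmat by auto
qed

lemma stab_pt_nmat_001: "stab (pt (nmat 0 0 1)) = {dmat (1 / a\<^sup>2) a a | a. a \<noteq> 0}"
proof -
  have "a * b * c = 1 \<and> 1 = 1 * c / b \<longleftrightarrow> b \<noteq> 0 \<and> c = b \<and> a = 1 / b\<^sup>2" for a b c :: real
    by (auto simp: field_simps power2_eq_square)
  then show ?thesis
    unfolding stab_pt_nmat by auto
qed

lemma stab_pt_nmat_000: "stab (pt (nmat 0 0 0)) = Dgrp"
  by (simp add: stab_pt_nmat Dgrp_eq)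

definition normal_forms :: "(real \<times> real \<times> real) set" where
  "normal_forms = {(1, 1, u) | u. u \<noteq> 0} \<union>
     {(0, 1, 1), (1, 0, 1), (1, 1, 0), (1, 0, 0), (0, 1, 0), (0, 0, 1), (0, 0, 0)}"

lemma normal_form_exists:
  "\<exists>(x0, y0, z0) \<in> normal_forms. \<exists>s t. s \<noteq> 0 \<and> t \<noteq> 0 \<and> x = x0 * s \<and> y = y0 * s * t \<and> z = z0 * t"
proof -
  have witness: "\<exists>(x0, y0, z0) \<in> normal_forms. \<exists>s t. s \<noteq> 0 \<and> t \<noteq> 0 \<and> x = x0 * s \<and> y = y0 * s * t \<and> z = z0 * t"
    if "(x0, y0, z0) \<in> normal_forms" "s \<noteq> 0" "t \<noteq> 0" "x = x0 * s" "y = y0 * s * t" "z = z0 * t"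
    for x0 y0 z0 s t
    using that by blast
  consider "x \<noteq> 0" "y \<noteq> 0" "z \<noteq> 0" | "x = 0 \<or> y = 0 \<or> z = 0"
    by blast
  then show ?thesis
  proof cases
    \<comment> \<open>the generic orbit is labelled by its invariant \<open>u = x z / y\<close>\<close>
    case 1
    then show ?thesis
      by (intro witness[of 1 1 "x * z / y" x "y / x"]) (auto simp: normal_forms_def)
  next
    case 2
    let ?t = "if z \<noteq> 0 then z else if x \<noteq> 0 \<and> y \<noteq> 0 then y / x else 1"
    let ?s = "if x \<noteq> 0 then x else if y \<noteq> 0 then y / ?t else 1"
    show ?thesis
      using 2 by (intro witness[of "of_bool (x \<noteq> 0)" "of_bool (y \<noteq> 0)" "of_bool (z \<noteq> 0)" ?s ?t])
        (auto simp: normal_forms_def)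
  qed
qed

lemma normal_form_unique:
  assumes "(x, y, z) \<in> normal_forms" "(x', y', z') \<in> normal_forms" "s \<noteq> 0" "t \<noteq> 0"
    and "x' = x * s" "y' = y * s * t" "z' = z * t"
  shows "(x', y', z') = (x, y, z)"
  using assms by (auto simp: normal_forms_def)

lemma nmat_in_Pgrp: "nmat x y z \<in> Pgrp"
  by (simp add: Pgrp_iff nmat_def)

lemma nmat_mult: "nmat x y z ** nmat x' y' z' = nmat (x + x') (y + x * z' + y') (z + z')"
  by (simp add: mat3_simps)

lemma Pgrp_factorization:
  assumes "p \<in> Pgrp"
  shows "p = dmat (p$1$1) (p$2$2) (p$3$3) ** nmat (p$1$2 / p$1$1) (p$1$3 / p$1$1) (p$2$3 / p$2$2)"
proof -
  have "p$2$1 = 0" "p$3$1 = 0" "p$3$2 = 0" "p$1$1 * p$2$2 * p$3$3 = 1"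
    using assms by (auto simp: Pgrp_iff)
  moreover from this have "p$1$1 \<noteq> 0" "p$2$2 \<noteq> 0"
    by auto
  ultimately show ?thesis
    by (simp add: mat3_simps)
qed

lemma coset_w0_Pgrp: "p \<in> Pgrp \<Longrightarrow> \<exists>x y z. coset (w0 ** p) = coset (w0 ** nmat x y z)"
  by (metis Pgrp_factorization Pgrp_iff coset_w0_dmat_mult)

lemma S_w0w0_eq_Union_orbits: "S_w0w0 = (\<Union>x y z. orbit (pt (nmat x y z)))"
proof (intro set_eqI iffI)
  fix e assume "e \<in> S_w0w0"
  then obtain p q g where "p \<in> Pgrp" "q \<in> Pgrp" "g \<in> SL3"
    and e: "e = act (coset (mat 1), coset (w0 ** p), coset (w0 ** q)) g"
    unfolding S_w0w0_def by blast
  then obtain x1 y1 z1 x2 y2 z2 where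
    cosets: "coset (w0 ** p) = coset (w0 ** nmat x1 y1 z1)" "coset (w0 ** q) = coset (w0 ** nmat x2 y2 z2)"
    using coset_w0_Pgrp by metis
  \<comment> \<open>\<open>(P, P w\<^sub>0 n\<^sub>1, P w\<^sub>0 n\<^sub>2) = (P, P w\<^sub>0, P w\<^sub>0 m) \<cdot> n\<^sub>1\<close> with \<open>m = n\<^sub>2 n\<^sub>1\<^sup>-\<^sup>1\<close>\<close>
  define m where "m = nmat (x2 - x1) (y2 - y1 - (x2 - x1) * z1) (z2 - z1)"
  have "w0 ** m ** nmat x1 y1 z1 = w0 ** nmat x2 y2 z2"
    by (simp add: m_def nmat_mult algebra_simps flip: matrix_mul_assoc)
  then have "act (pt m) (nmat x1 y1 z1) = (coset (mat 1), coset (w0 ** p), coset (w0 ** q))"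
    using coset_mult_Pgrp[OF nmat_in_Pgrp, of x1 y1 z1 "mat 1"] by (simp add: act_pt cosets)
  then have "e = act (pt m) (nmat x1 y1 z1 ** g)"
    using e act_act[of "pt m" "nmat x1 y1 z1" g] by simp
  moreover have "nmat x1 y1 z1 ** g \<in> SL3"
    using nmat_in_Pgrp \<open>g \<in> SL3\<close> by (auto simp: Pgrp_def intro: SL3_mult)
  ultimately show "e \<in> (\<Union>x y z. orbit (pt (nmat x y z)))"
    unfolding m_def orbit_def by blast
next
  fix e assume "e \<in> (\<Union>x y z. orbit (pt (nmat x y z)))"
  then obtain x y z g where "g \<in> SL3" "e = act (coset (mat 1), coset (w0 ** mat 1), coset (w0 ** nmat x y z)) g"
    unfolding orbit_def pt_def by auto
  then show "e \<in> S_w0w0"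
    unfolding S_w0w0_def using mat1_in_Pgrp nmat_in_Pgrp by blast
qed

lemma orbit_pt_nmat_normal_form:
  "\<exists>(x0, y0, z0) \<in> normal_forms. orbit (pt (nmat x y z)) = orbit (pt (nmat x0 y0 z0))"
proof -
  obtain x0 y0 z0 s t where "(x0, y0, z0) \<in> normal_forms" "s \<noteq> 0" "t \<noteq> 0"
    "x = x0 * s" "y = y0 * s * t" "z = z0 * t"
    using normal_form_exists[of x y z] by auto
  moreover from this have "pt (nmat x y z) \<in> orbit (pt (nmat x0 y0 z0))"
    by (auto simp: pt_nmat_in_orbit_iff)
  ultimately show ?thesis
    using orbit_eq by blast
qed

lemma orbits_normal_forms_disjoint:
  assumes "(x, y, z) \<in> normal_forms" "(x', y', z') \<in> normal_forms"
    and "orbit (pt (nmat x y z)) \<inter> orbit (pt (nmat x' y' z')) \<noteq> {}"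
  shows "(x', y', z') = (x, y, z)"
proof -
  have "pt (nmat x' y' z') \<in> orbit (pt (nmat x y z))"
    using orbits_meet_imp_eq[OF assms(3)] mem_orbit_self by blast
  then show ?thesis
    using normal_form_unique[OF assms(1,2)] by (auto simp: pt_nmat_in_orbit_iff)
qed

lemma S_w0w0_eq_Union_normal_forms:
  "S_w0w0 = (\<Union>(x, y, z) \<in> normal_forms. orbit (pt (nmat x y z)))"
proof -
  have "orbit (pt (nmat x y z)) \<subseteq> (\<Union>(x, y, z) \<in> normal_forms. orbit (pt (nmat x y z)))" for x y z
    using orbit_pt_nmat_normal_form[of x y z] by force
  then show ?thesis
    unfolding S_w0w0_eq_Union_orbits by blast
qed

theorem mainTheorem5:
  defines "Reps \<equiv> {nmat 1 1 u | u. u \<noteq> 0} \<union>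
     {nmat 0 1 1, nmat 1 0 1, nmat 1 1 0, nmat 1 0 0, nmat 0 1 0, nmat 0 0 1, nmat 0 0 0}"
  shows
    "S_w0w0 = (\<Union>n\<in>Reps. orbit (pt n))
     \<and> (\<forall>n\<in>Reps. \<forall>m\<in>Reps. n \<noteq> m \<longrightarrow> orbit (pt n) \<inter> orbit (pt m) = {})
     \<and> group_dim SL3 = 8
     \<and> (\<forall>u::real. u \<noteq> 0 \<longrightarrow> orbit_dim (pt (nmat 1 1 u)) = 8)
     \<and> orbit_dim (pt (nmat 0 1 1)) = 8 \<and> stab (pt (nmat 0 1 1)) = {mat 1}
     \<and> orbit_dim (pt (nmat 1 0 1)) = 8 \<and> stab (pt (nmat 1 0 1)) = {mat 1}
     \<and> orbit_dim (pt (nmat 1 1 0)) = 8 \<and> stab (pt (nmat 1 1 0)) = {mat 1}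
     \<and> orbit_dim (pt (nmat 1 0 0)) = 7
     \<and> stab (pt (nmat 1 0 0)) = {dmat a a (1 / a^2) | a. a \<noteq> 0}
     \<and> orbit_dim (pt (nmat 0 1 0)) = 7
     \<and> stab (pt (nmat 0 1 0)) = {dmat a (1 / a^2) a | a. a \<noteq> 0}
     \<and> orbit_dim (pt (nmat 0 0 1)) = 7
     \<and> stab (pt (nmat 0 0 1)) = {dmat (1 / a^2) a a | a. a \<noteq> 0}
     \<and> orbit_dim (pt (nmat 0 0 0)) = 6
     \<and> stab (pt (nmat 0 0 0)) = Dgrp"
proof -
  have Reps: "Reps = (\<lambda>(x, y, z). nmat x y z) ` normal_forms"
    unfolding Reps_def normal_forms_def image_Un by (simp add: image_Collect)
  have "S_w0w0 = (\<Union>n\<in>Reps. orbit (pt n))"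
    unfolding Reps S_w0w0_eq_Union_normal_forms by (simp add: case_prod_beta)
  moreover have "\<forall>n\<in>Reps. \<forall>m\<in>Reps. n \<noteq> m \<longrightarrow> orbit (pt n) \<inter> orbit (pt m) = {}"
    unfolding Reps using orbits_normal_forms_disjoint by fastforce
  ultimately show ?thesis
    by (simp add: orbit_dim_def group_dim_SL3 group_dim_trivial group_dim_Dgrp
        group_dim_torus_12 group_dim_torus_13 group_dim_torus_23
        stab_pt_nmat_11u stab_pt_nmat_011 stab_pt_nmat_101 stab_pt_nmat_110
        stab_pt_nmat_100 stab_pt_nmat_010 stab_pt_nmat_001 stab_pt_nmat_000)
qed

end
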